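(* Let $S$ be a finite collection of squares of sizes $d_i\times d_i$, where each $d_i$ is a power of two. Then the squares of $S$ can be placed axis-parallel in the plane without overlapping so that they fully cover an axis-parallel square of side length at least $\frac12\sqrt{\sum_i d_i^2}$. *)

theory Defs
  imports Complex_Main
begin

definition csq :: "real \<Rightarrow> real \<Rightarrow> real \<Rightarrow> (real \<times> real) set" where
  "csq a b d = {(x, y). a \<le> x \<and> x \<le> a + d \<and> b \<le> y \<and> y \<le> b + d}"

definition osq :: "real \<Rightarrow> real \<Rightarrow> real \<Rightarrow> (real \<times> real) set" where
  "osq a b d = {(x, y). a < x \<and> x < a + d \<and> b < y \<and> y < b + d}"

end

theory Submission
  imports Defs "HOL-Library.Disjoint_Sets"
begin

text \<open>
  Rescale so that the sides are \<open>c * 2 ^ e i\<close> with natural exponents, and let \<open>4 ^ T\<close> be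
  the largest power of four not exceeding \<open>N = (\<Sum>i. 4 ^ e i)\<close>; then every \<open>e i \<le> T\<close>.
  Since the areas \<open>4 ^ e i\<close> form a divisibility chain, a greedy choice yields a subfamily
  of total area exactly \<open>4 ^ T\<close> (in units of \<open>c\<^sup>2\<close>), and every such family tiles the square
  of side \<open>c * 2 ^ T\<close>: a square of that size does so alone, and otherwise the family
  splits into four subfamilies of area \<open>4 ^ (T - 1)\<close> that tile the four quadrants by
  induction. As \<open>N < 4 ^ (T + 1)\<close>, this side is at least \<open>sqrt (c\<^sup>2 * N) / 2\<close>.
  The remaining squares are put in a row to the right of the tiled square.
\<close>

lemma exists_subset_sum_dvd_chain:
  fixes f :: "'a \<Rightarrow> nat"
  assumes "finite A"
    and "\<forall>i\<in>A. \<forall>j\<in>A. f i \<le> f j \<longrightarrow> f i dvd f j"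
    and "\<forall>i\<in>A. f i dvd G" and "G \<le> sum f A"
  shows "\<exists>B\<subseteq>A. sum f B = G"
  using assms
proof (induction A arbitrary: G rule: finite_remove_induct)
  case empty
  then show ?case by simp
next
  case (remove A)
  show ?case
  proof (cases "G = 0")
    case True
    then show ?thesis by (intro exI[of _ "{}"]) simp
  next
    case False
    have "Max (f ` A) \<in> f ` A"
      using remove.hyps(1,2) by (intro Max_in) auto
    then obtain i where i: "i \<in> A" and "f i = Max (f ` A)"
      by (metis imageE)
    then have max: "\<forall>j\<in>A. f j \<le> f i"
      using remove.hyps(1) by simp
    have "f i \<le> G"
      using remove.prems(2) i False by (simp add: dvd_imp_le)
    have "\<exists>B\<subseteq>A - {i}. sum f B = G - f i"
    proof (rule remove.IH[OF i])
      show "\<forall>j\<in>A - {i}. \<forall>k\<in>A - {i}. f j \<le> f k \<longrightarrow> f j dvd f k"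
        using remove.prems(1) by blast
      show "\<forall>j\<in>A - {i}. f j dvd G - f i"
        using i max remove.prems(1,2) by (simp add: dvd_diff_nat)
      show "G - f i \<le> sum f (A - {i})"
        using remove.prems(3) i remove.hyps(1) by (simp add: sum_diff1_nat)
    qed
    then obtain B where B: "B \<subseteq> A - {i}" "sum f B = G - f i"
      by blast
    have "finite B"
      using remove.hyps(1) B(1) by (meson finite_Diff rev_finite_subset)
    moreover have "i \<notin> B"
      using B(1) by blast
    ultimately have "sum f (insert i B) = G"
      using B(2) \<open>f i \<le> G\<close> by simp
    moreover have "insert i B \<subseteq> A"
      using B(1) i by blast
    ultimately show ?thesis
      by blast
  qed
qed

lemma sum_nat_eq_member_imp_singleton:
  fixes f :: "'a \<Rightarrow> nat"
  assumes "finite A" "i \<in> A" "\<forall>j\<in>A. 0 < f j" "sum f A = f i"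
  shows "A = {i}"
proof -
  have "sum f (A - {i}) = 0"
    using assms(1,2,4) by (simp add: sum.remove)
  then have "A - {i} = {}"
    using assms(1,3) by (force simp: sum_eq_0_iff)
  then show ?thesis
    using assms(2) by blast
qed

lemma exists_subset_sum_eq_power:
  fixes e :: "'a \<Rightarrow> nat" and r :: nat
  assumes "finite A" "1 < r" "\<forall>i\<in>A. e i \<le> t" "r ^ t \<le> (\<Sum>i\<in>A. r ^ e i)"
  shows "\<exists>B\<subseteq>A. (\<Sum>i\<in>B. r ^ e i) = r ^ t"
proof (rule exists_subset_sum_dvd_chain)
  show "\<forall>i\<in>A. \<forall>j\<in>A. r ^ e i \<le> r ^ e j \<longrightarrow> r ^ e i dvd r ^ e j"
    using assms(2) by (auto intro: le_imp_power_dvd dest: power_le_imp_le_exp)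
  show "\<forall>i\<in>A. r ^ e i dvd r ^ t"
    using assms(3) by (auto intro: le_imp_power_dvd)
qed (use assms in auto)

lemma dyadic_sum_split_four:
  fixes e :: "'a \<Rightarrow> nat"
  assumes "finite A" "\<forall>i\<in>A. e i \<le> t" "(\<Sum>i\<in>A. 4 ^ e i) = 4 * (4::nat) ^ t"
  obtains A1 A2 A3 A4 where "A = A1 \<union> A2 \<union> (A3 \<union> A4)"
    "A1 \<inter> A2 = {}" "A3 \<inter> A4 = {}" "(A1 \<union> A2) \<inter> (A3 \<union> A4) = {}"
    "(\<Sum>i\<in>A1. 4 ^ e i) = (4::nat) ^ t" "(\<Sum>i\<in>A2. 4 ^ e i) = (4::nat) ^ t"
    "(\<Sum>i\<in>A3. 4 ^ e i) = (4::nat) ^ t" "(\<Sum>i\<in>A4. 4 ^ e i) = (4::nat) ^ t"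
proof -
  let ?f = "\<lambda>i. (4::nat) ^ e i"
  have part: "\<exists>B\<subseteq>A'. sum ?f B = 4 ^ t" if "A' \<subseteq> A" "4 ^ t \<le> sum ?f A'" for A'
  proof (rule exists_subset_sum_eq_power)
    show "finite A'"
      using assms(1) that(1) by (rule rev_finite_subset)
  qed (use assms(2) that in auto)
  obtain A1 where A1: "A1 \<subseteq> A" "sum ?f A1 = 4 ^ t"
    using part[of A] assms(3) by auto
  have diff: "sum ?f (A' - B) = sum ?f A' - sum ?f B" if "B \<subseteq> A'" "A' \<subseteq> A" for A' B
    using that assms(1) by (meson rev_finite_subset subset_trans sum_diff_nat)
  have rest1: "sum ?f (A - A1) = 3 * 4 ^ t"
    using diff[of A1 A] A1 assms(3) by simp
  obtain A2 where A2: "A2 \<subseteq> A - A1" "sum ?f A2 = 4 ^ t"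
    using part[of "A - A1"] rest1 by auto
  have rest2: "sum ?f (A - A1 - A2) = 2 * 4 ^ t"
    using diff[of A2 "A - A1"] A2 rest1 by simp
  obtain A3 where A3: "A3 \<subseteq> A - A1 - A2" "sum ?f A3 = 4 ^ t"
    using part[of "A - A1 - A2"] rest2 by auto
  have rest3: "sum ?f (A - A1 - A2 - A3) = 4 ^ t"
    using diff[of A3 "A - A1 - A2"] A3 rest2 by auto
  show thesis
    by (rule that[of A1 A2 A3 "A - A1 - A2 - A3"]) (use A1 A2 A3 rest3 in auto)
qed

lemma two_powr_int_common_factor:
  fixes k :: "'a \<Rightarrow> int"
  assumes "finite I"
  obtains c e where "c > 0" "\<forall>i\<in>I. 2 powr k i = c * 2 ^ e i"
proof -
  obtain m where m: "\<forall>i\<in>I. m \<le> k i"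
    using bdd_below_finite[of "k ` I"] assms by (auto simp: bdd_below_def)
  have "2 powr k i = 2 powr m * 2 ^ nat (k i - m)" if "i \<in> I" for i
  proof -
    have "2 powr k i = 2 powr (m + real (nat (k i - m)))"
      using m that by simp
    then show ?thesis
      unfolding powr_add by (simp add: powr_realpow)
  qed
  then show thesis
    using that[of "2 powr m" "\<lambda>i. nat (k i - m)"] by simp
qed

lemma sqrt_sum_squares_le_if_dyadic:
  fixes e :: "'a \<Rightarrow> nat"
  assumes "0 \<le> c" "\<forall>i\<in>I. d i = c * 2 ^ e i" "(\<Sum>i\<in>I. 4 ^ e i) < (4::nat) ^ Suc T"
  shows "sqrt (\<Sum>i\<in>I. (d i)\<^sup>2) / 2 \<le> c * 2 ^ T"
proof -
  have "(d i)\<^sup>2 = c\<^sup>2 * 4 ^ e i" if "i \<in> I" for i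
  proof -
    have "((2::real) ^ e i)\<^sup>2 = 4 ^ e i"
      by (simp add: power2_eq_square flip: power_mult_distrib)
    then show ?thesis
      using assms(2) that by (simp add: power_mult_distrib)
  qed
  then have "(\<Sum>i\<in>I. (d i)\<^sup>2) = c\<^sup>2 * real (\<Sum>i\<in>I. 4 ^ e i)"
    by (simp add: sum_distrib_left)
  also have "\<dots> \<le> c\<^sup>2 * 4 ^ Suc T"
  proof (rule mult_left_mono)
    show "real (\<Sum>i\<in>I. 4 ^ e i) \<le> 4 ^ Suc T"
      using assms(3) by (metis less_imp_le of_nat_le_iff of_nat_numeral of_nat_power)
  qed simp
  also have "\<dots> = (2 * (c * 2 ^ T))\<^sup>2"
    by (simp add: power2_eq_square flip: power_mult_distrib)
  finally have "sqrt (\<Sum>i\<in>I. (d i)\<^sup>2) \<le> 2 * (c * 2 ^ T)"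
    using assms(1) by (intro real_le_lsqrt) auto
  then show ?thesis
    by simp
qed

text \<open>
  A tiling of a square takes \<open>R\<close> to be its interior and \<open>C\<close> the closed square;
  \<open>R\<close> only serves to keep separately tiled regions apart.
\<close>
definition tiling :: "(nat \<Rightarrow> real) \<Rightarrow> (nat \<Rightarrow> real) \<Rightarrow> (nat \<Rightarrow> real) \<Rightarrow> nat set \<Rightarrow>
    (real \<times> real) set \<Rightarrow> (real \<times> real) set \<Rightarrow> bool"
  where "tiling a b d A R C \<longleftrightarrow>
    (\<forall>i\<in>A. osq (a i) (b i) (d i) \<subseteq> R) \<and>
    disjoint_family_on (\<lambda>i. osq (a i) (b i) (d i)) A \<and>
    C \<subseteq> (\<Union>i\<in>A. csq (a i) (b i) (d i))"

lemma tiling_mono: "tiling a b d A R C \<Longrightarrow> R \<subseteq> R' \<Longrightarrow> C' \<subseteq> C \<Longrightarrow> tiling a b d A R' C'"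
  unfolding tiling_def by blast

lemma tiling_singleton: "tiling (\<lambda>_. x) (\<lambda>_. y) d {i} (osq x y (d i)) (csq x y (d i))"
  unfolding tiling_def disjoint_family_on_def by simp

lemma tiling_Un:
  assumes "tiling a b d A R C" "tiling a' b' d B R' C'" "A \<inter> B = {}" "R \<inter> R' = {}"
  shows "\<exists>a'' b''. tiling a'' b'' d (A \<union> B) (R \<union> R') (C \<union> C')"
proof -
  let ?a = "\<lambda>i. if i \<in> A then a i else a' i" and ?b = "\<lambda>i. if i \<in> A then b i else b' i"
  let ?sq = "\<lambda>i. osq (?a i) (?b i) (d i)"
  have inR: "?sq i \<subseteq> R" if "i \<in> A" for i
    using assms(1) that unfolding tiling_def by auto
  have inR': "?sq i \<subseteq> R'" if "i \<in> B" "i \<notin> A" for i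
    using assms(2) that unfolding tiling_def by auto
  have apart: "X \<inter> Y = {}" if "X \<subseteq> R" "Y \<subseteq> R'" for X Y
    using that assms(4) by blast
  have dA: "disjoint_family_on (\<lambda>i. osq (a i) (b i) (d i)) A"
    and dB: "disjoint_family_on (\<lambda>i. osq (a' i) (b' i) (d i)) B"
    using assms(1,2) unfolding tiling_def by blast+
  have "disjoint_family_on ?sq (A \<union> B)"
    unfolding disjoint_family_on_def
  proof (intro ballI impI)
    fix i j assume ij: "i \<in> A \<union> B" "j \<in> A \<union> B" "i \<noteq> j"
    show "?sq i \<inter> ?sq j = {}"
    proof (cases "i \<in> A \<longleftrightarrow> j \<in> A")
      case True
      then show ?thesis
        using ij disjoint_family_onD[OF dA, of i j] disjoint_family_onD[OF dB, of i j] by auto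
    next
      case False
      then show ?thesis
        using ij apart[OF inR inR'] apart[OF inR inR', of j i] by (cases "i \<in> A") auto
    qed
  qed
  moreover have "C \<union> C' \<subseteq> (\<Union>i\<in>A \<union> B. csq (?a i) (?b i) (d i))"
    using assms(1,2,3) unfolding tiling_def by force
  ultimately have "tiling ?a ?b d (A \<union> B) (R \<union> R') (C \<union> C')"
    using inR inR' unfolding tiling_def by blast
  then show ?thesis
    by blast
qed

lemma tiling_quadrants:
  assumes "tiling a1 b1 d A1 (osq x y h) (csq x y h)"
    and "tiling a2 b2 d A2 (osq (x + h) y h) (csq (x + h) y h)"
    and "tiling a3 b3 d A3 (osq x (y + h) h) (csq x (y + h) h)"
    and "tiling a4 b4 d A4 (osq (x + h) (y + h) h) (csq (x + h) (y + h) h)"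
    and "A1 \<inter> A2 = {}" "A3 \<inter> A4 = {}" "(A1 \<union> A2) \<inter> (A3 \<union> A4) = {}"
  shows "\<exists>a b. tiling a b d (A1 \<union> A2 \<union> (A3 \<union> A4)) (osq x y (2 * h)) (csq x y (2 * h))"
proof -
  obtain a12 b12 where bottom: "tiling a12 b12 d (A1 \<union> A2)
      (osq x y h \<union> osq (x + h) y h) (csq x y h \<union> csq (x + h) y h)"
    using tiling_Un[OF assms(1,2,5)] by (force simp: osq_def)
  obtain a34 b34 where top: "tiling a34 b34 d (A3 \<union> A4)
      (osq x (y + h) h \<union> osq (x + h) (y + h) h) (csq x (y + h) h \<union> csq (x + h) (y + h) h)"
    using tiling_Un[OF assms(3,4,6)] by (force simp: osq_def)
  obtain a b where "tiling a b d (A1 \<union> A2 \<union> (A3 \<union> A4))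
      (osq x y h \<union> osq (x + h) y h \<union> (osq x (y + h) h \<union> osq (x + h) (y + h) h))
      (csq x y h \<union> csq (x + h) y h \<union> (csq x (y + h) h \<union> csq (x + h) (y + h) h))"
    using tiling_Un[OF bottom top assms(7)] by (force simp: osq_def)
  moreover have "osq x y h \<union> osq (x + h) y h \<union> (osq x (y + h) h \<union> osq (x + h) (y + h) h)
      \<subseteq> osq x y (2 * h)"
    by (auto simp: osq_def)
  moreover have "csq x y (2 * h)
      \<subseteq> csq x y h \<union> csq (x + h) y h \<union> (csq x (y + h) h \<union> csq (x + h) (y + h) h)"
    by (auto simp: csq_def)
  ultimately show ?thesis
    by (blast intro: tiling_mono)
qed

lemma dyadic_squares_tile_square:
  fixes e :: "nat \<Rightarrow> nat"
  assumes "finite A" "\<forall>i\<in>A. e i \<le> t" "\<forall>i\<in>A. d i = c * 2 ^ e i"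
    and "(\<Sum>i\<in>A. 4 ^ e i) = (4::nat) ^ t"
  shows "\<exists>a b. tiling a b d A (osq x y (c * 2 ^ t)) (csq x y (c * 2 ^ t))"
  using assms
proof (induction t arbitrary: A x y)
  case 0
  then obtain i where i: "i \<in> A"
    by fastforce
  then have "A = {i}"
    using 0 by (intro sum_nat_eq_member_imp_singleton[where f = "\<lambda>j. 4 ^ e j"]) auto
  then show ?case
    using tiling_singleton[of x y d i] 0(2,3) i by auto
next
  case (Suc t)
  show ?case
  proof (cases "\<exists>i\<in>A. e i = Suc t")
    case True
    then obtain i where i: "i \<in> A" "e i = Suc t"
      by blast
    then have "A = {i}"
      using Suc.prems by (intro sum_nat_eq_member_imp_singleton[where f = "\<lambda>j. 4 ^ e j"]) auto
    then show ?thesis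
      using tiling_singleton[of x y d i] Suc.prems(3) i(2) by auto
  next
    case False
    then have small: "\<forall>i\<in>A. e i \<le> t"
      using Suc.prems(2) le_Suc_eq by blast
    have "(\<Sum>i\<in>A. 4 ^ e i) = 4 * (4::nat) ^ t"
      using Suc.prems(4) by simp
    then obtain A1 A2 A3 A4 where A: "A = A1 \<union> A2 \<union> (A3 \<union> A4)"
      "A1 \<inter> A2 = {}" "A3 \<inter> A4 = {}" "(A1 \<union> A2) \<inter> (A3 \<union> A4) = {}"
      "(\<Sum>i\<in>A1. 4 ^ e i) = (4::nat) ^ t" "(\<Sum>i\<in>A2. 4 ^ e i) = (4::nat) ^ t"
      "(\<Sum>i\<in>A3. 4 ^ e i) = (4::nat) ^ t" "(\<Sum>i\<in>A4. 4 ^ e i) = (4::nat) ^ t"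
      by (rule dyadic_sum_split_four[OF Suc.prems(1) small])
    let ?h = "c * 2 ^ t"
    have quadrant: "\<exists>a b. tiling a b d A' (osq x' y' ?h) (csq x' y' ?h)"
      if "A' \<subseteq> A" "(\<Sum>i\<in>A'. 4 ^ e i) = (4::nat) ^ t" for A' x' y'
    proof (rule Suc.IH)
      show "finite A'"
        using Suc.prems(1) that(1) by (rule rev_finite_subset)
    qed (use Suc.prems(3) small that in auto)
    have sub: "A1 \<subseteq> A" "A2 \<subseteq> A" "A3 \<subseteq> A" "A4 \<subseteq> A"
      using A(1) by auto
    obtain a1 b1 where "tiling a1 b1 d A1 (osq x y ?h) (csq x y ?h)"
      using quadrant[OF sub(1) A(5)] by blast
    moreover obtain a2 b2 where "tiling a2 b2 d A2 (osq (x + ?h) y ?h) (csq (x + ?h) y ?h)"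
      using quadrant[OF sub(2) A(6)] by blast
    moreover obtain a3 b3 where "tiling a3 b3 d A3 (osq x (y + ?h) ?h) (csq x (y + ?h) ?h)"
      using quadrant[OF sub(3) A(7)] by blast
    moreover obtain a4 b4 where
      "tiling a4 b4 d A4 (osq (x + ?h) (y + ?h) ?h) (csq (x + ?h) (y + ?h) ?h)"
      using quadrant[OF sub(4) A(8)] by blast
    ultimately have "\<exists>a b. tiling a b d A (osq x y (2 * ?h)) (csq x y (2 * ?h))"
      unfolding A(1) using A(2-4) by (rule tiling_quadrants)
    then show ?thesis
      by (simp add: mult.commute mult.left_commute)
  qed
qed

lemma osq_disjoint_if_left: "a + d \<le> a' \<Longrightarrow> osq a b d \<inter> osq a' b' d' = {}"
  by (auto simp: osq_def)

lemma tiling_row: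
  assumes "0 \<le> M" "\<forall>i\<in>A. d i \<le> M"
  shows "tiling (\<lambda>i. x + real i * M) (\<lambda>_. y) d A {p. x < fst p} {}"
proof -
  let ?sq = "\<lambda>i. osq (x + real i * M) y (d i)"
  have apart: "?sq i \<inter> ?sq j = {}" if "i \<in> A" "i < j" for i j
  proof (rule osq_disjoint_if_left)
    have "(real i + 1) * M \<le> real j * M"
      using that(2) assms(1) by (intro mult_right_mono) auto
    then show "x + real i * M + d i \<le> x + real j * M"
      using that(1) assms(2) by (auto simp: algebra_simps)
  qed
  have "disjoint_family_on ?sq A"
    unfolding disjoint_family_on_def
  proof (intro ballI impI)
    fix i j
    assume "i \<in> A" "j \<in> A" "i \<noteq> j"
    then consider "i \<in> A" "i < j" | "j \<in> A" "j < i"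
      by linarith
    then show "?sq i \<inter> ?sq j = {}"
      by cases (use apart in \<open>auto simp: Int_commute\<close>)
  qed
  moreover have "?sq i \<subseteq> {p. x < fst p}" for i
  proof -
    have "0 \<le> real i * M"
      using assms(1) by simp
    then show ?thesis
      by (auto simp: osq_def)
  qed
  ultimately show ?thesis
    unfolding tiling_def by blast
qed

lemma tiling_extend_by_row:
  assumes "tiling a b d A R C" "R \<subseteq> {p. fst p < x}" "finite I" "A \<subseteq> I"
  shows "\<exists>a' b'. tiling a' b' d I UNIV C"
proof -
  define M where "M = (\<Sum>i\<in>I. \<bar>d i\<bar>)"
  have "d i \<le> M" if "i \<in> I" for i
  proof -
    have "\<bar>d i\<bar> \<le> M"
      unfolding M_def using assms(3) that by (intro member_le_sum) auto
    then show ?thesis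
      by linarith
  qed
  moreover have "0 \<le> M"
    unfolding M_def by (simp add: sum_nonneg)
  ultimately have "tiling (\<lambda>i. x + real i * M) (\<lambda>_. 0) d (I - A) {p. x < fst p} {}"
    by (intro tiling_row) auto
  moreover have "R \<inter> {p. x < fst p} = {}"
    using assms(2) by auto
  moreover have "A \<inter> (I - A) = {}"
    by blast
  ultimately obtain a' b' where "tiling a' b' d (A \<union> (I - A)) (R \<union> {p. x < fst p}) (C \<union> {})"
    using tiling_Un[OF assms(1)] by blast
  moreover have "A \<union> (I - A) = I"
    using assms(4) by blast
  ultimately have "tiling a' b' d I (R \<union> {p. x < fst p}) C"
    by simp
  then show ?thesis
    by (blast intro: tiling_mono)
qed

theorem lemma5:
  fixes k :: "nat \<Rightarrow> int" and n :: nat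
  assumes "n \<ge> 1"
  defines "d \<equiv> (\<lambda>i. (2::real) powr (real_of_int (k i)))"
  shows "\<exists>a b :: nat \<Rightarrow> real.
           (\<forall>i<n. \<forall>j<n. i \<noteq> j \<longrightarrow> osq (a i) (b i) (d i) \<inter> osq (a j) (b j) (d j) = {}) \<and>
           (\<exists>x0 y0 s. s \<ge> sqrt (\<Sum>i<n. (d i)^2) / 2 \<and>
              csq x0 y0 s \<subseteq> (\<Union>i<n. csq (a i) (b i) (d i)))"
proof -
  obtain c e where "c > 0" and de: "\<forall>i\<in>{..<n}. d i = c * 2 ^ e i"
    using two_powr_int_common_factor[of "{..<n}" k] unfolding d_def by blast
  define N where "N = (\<Sum>i<n. (4::nat) ^ e i)"
  have "0 < N"
    unfolding N_def using assms(1) by (intro sum_pos) (auto simp: lessThan_empty_iff)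
  then obtain T where T: "4 ^ T \<le> N" "N < 4 ^ Suc T"
    using ex_power_ivl1[of 4 N] by auto
  have e_le: "\<forall>i\<in>{..<n}. e i \<le> T"
  proof
    fix i assume "i \<in> {..<n}"
    then have "(4::nat) ^ e i \<le> N"
      unfolding N_def by (intro member_le_sum) auto
    then have "(4::nat) ^ e i < 4 ^ Suc T"
      using T(2) by linarith
    then have "e i < Suc T"
      by (rule power_less_imp_less_exp[rotated]) simp
    then show "e i \<le> T"
      by simp
  qed
  then obtain B where B: "B \<subseteq> {..<n}" "(\<Sum>i\<in>B. 4 ^ e i) = (4::nat) ^ T"
    using exists_subset_sum_eq_power[of "{..<n}" 4 e T] T(1) unfolding N_def by auto
  define s where "s = c * 2 ^ T"
  have "\<exists>a b. tiling a b d B (osq 0 0 s) (csq 0 0 s)"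
    unfolding s_def using B e_le de
    by (intro dyadic_squares_tile_square) (auto intro: rev_finite_subset)
  moreover have "osq 0 0 s \<subseteq> {p. fst p < s}"
    by (auto simp: osq_def)
  ultimately obtain a b where "tiling a b d {..<n} UNIV (csq 0 0 s)"
    using tiling_extend_by_row[OF _ _ finite_lessThan B(1)] by blast
  then have "\<forall>i<n. \<forall>j<n. i \<noteq> j \<longrightarrow> osq (a i) (b i) (d i) \<inter> osq (a j) (b j) (d j) = {}"
    and "csq 0 0 s \<subseteq> (\<Union>i<n. csq (a i) (b i) (d i))"
    unfolding tiling_def disjoint_family_on_def by auto
  moreover have "sqrt (\<Sum>i<n. (d i)\<^sup>2) / 2 \<le> s"
    unfolding s_def using \<open>c > 0\<close> de T(2)
    by (intro sqrt_sum_squares_le_if_dyadic) (auto simp: N_def)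
  ultimately show ?thesis
    by blast
qed

end
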